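(* There exists a constant $k_1$ such that for every integer $m\ge1$ there exists an acyclic directed multigraph $D'_m$ with exactly $m$ arcs such that $\mathrm{mac}(D'_m)\le\frac m4+k_1m^{3/4}$.
   Context: A directed multigraph may have parallel arcs (but no loops); it is acyclic if it contains no directed cycle. For a directed multigraph, $\mathrm{mac}(D)$ is the maximum, over all partitions $(X,Y)$ of the vertex set, of the number of arcs (counted with multiplicity) going from $X$ to $Y$. *)

theory Defs
  imports Complex_Main "HOL-Library.Multiset"
begin

definition dmultigraph :: "'a set \<Rightarrow> ('a \<times> 'a) multiset \<Rightarrow> bool" where
  "dmultigraph V A \<longleftrightarrow> finite V \<and> (\<forall>(u,v) \<in> set_mset A. u \<in> V \<and> v \<in> V \<and> u \<noteq> v)"

definition dm_acyclic :: "('a \<times> 'a) multiset \<Rightarrow> bool" where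
  "dm_acyclic A \<longleftrightarrow> acyclic (set_mset A)"

definition arcs_between :: "('a \<times> 'a) multiset \<Rightarrow> 'a set \<Rightarrow> 'a set \<Rightarrow> nat" where
  "arcs_between A X Y = size (filter_mset (\<lambda>(u,v). u \<in> X \<and> v \<in> Y) A)"

definition mac :: "'a set \<Rightarrow> ('a \<times> 'a) multiset \<Rightarrow> nat" where
  "mac V A = Max {arcs_between A X (V - X) | X. X \<subseteq> V}"

end

theory Submission
  imports Defs
begin

text \<open>Put a transitive tournament on each of the \<open>N\<close> windows \<open>[k, k + L)\<close>, \<open>k < N\<close>, of the
  vertices \<open>0, 1, 2, \<dots>\<close>, with \<open>L \<approx> m powr (1/4)\<close> and \<open>N \<approx> 2m / L\<^sup>2\<close>. If \<open>a\<close> of the window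
  positions \<open>p < L\<close> lie in a cut \<open>X\<close>, the tournament has \<open>(a (L - a) + \<Sum>\<^sub>p (L - 1 - 2p)) / 2\<close>
  arcs from \<open>X\<close> to its complement, where \<open>p\<close> ranges over the positions in \<open>X\<close>. The first term
  is at most \<open>L\<^sup>2/4\<close>; the second is the drop of the potential \<open>\<Sum>\<^sub>p (p + 1)(L - 1 - p)\<close> from
  one window to the next, so over all windows it telescopes to \<open>O(L\<^sup>3)\<close>. Every cut therefore
  has at most \<open>N L\<^sup>2/8 + O(L\<^sup>3) = m/4 + O(m powr (3/4))\<close> arcs.\<close>

lemma arcs_between_add:
  "arcs_between (A + B) X Y = arcs_between A X Y + arcs_between B X Y"
  by (simp add: arcs_between_def)

lemma arcs_between_le_size: "arcs_between A X Y \<le> size A"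
  unfolding arcs_between_def by (rule size_filter_mset_lesseq)

lemma arcs_between_mono: "Y \<subseteq> Y' \<Longrightarrow> arcs_between A X Y \<le> arcs_between A X Y'"
  unfolding arcs_between_def
  by (intro size_mset_mono filter_mset_mono_strong) auto

lemma arcs_between_mset:
  "arcs_between (mset xs) X Y = length (filter (\<lambda>(u, v). u \<in> X \<and> v \<in> Y) xs)"
  by (induction xs) (auto simp: arcs_between_def)

lemma mac_attained:
  assumes "finite V"
  obtains X where "X \<subseteq> V" and "mac V A = arcs_between A X (V - X)"
proof -
  have "{arcs_between A X (V - X) | X. X \<subseteq> V} = (\<lambda>X. arcs_between A X (V - X)) ` Pow V"
    by auto
  moreover have "Max ((\<lambda>X. arcs_between A X (V - X)) ` Pow V) \<in> (\<lambda>X. arcs_between A X (V - X)) ` Pow V"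
    using assms by (intro Max_in) auto
  ultimately show ?thesis
    using that unfolding mac_def by auto
qed

fun window_tournament :: "nat \<Rightarrow> nat \<Rightarrow> (nat \<times> nat) multiset" where
  "window_tournament k 0 = {#}"
| "window_tournament k (Suc l) =
     window_tournament k l + mset (map (\<lambda>p. (k + p, k + l)) [0..<l])"

lemma window_tournament_arcD:
  "(u, v) \<in># window_tournament k l \<Longrightarrow> k \<le> u \<and> u < v \<and> v < k + l"
  by (induction l) auto

lemma double_size_window_tournament: "2 * size (window_tournament k l) = l * (l - 1)"
proof (induction l)
  case (Suc l)
  then show ?case by (cases l) (auto simp: algebra_simps)
qed simp

lemma size_window_tournament: "size (window_tournament k l) = l * (l - 1) div 2"
  using double_size_window_tournament[of k l] by simp

lemma length_filter_upt: "int (length (filter P [0..<l])) = (\<Sum>p<l. if P p then 1 else 0)"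
  by (induction l) auto

lemma double_cut_window_tournament:
  fixes k :: nat and X :: "nat set"
  defines "a l \<equiv> (\<Sum>p<l. if k + p \<in> X then 1 else 0 :: int)"
  shows "2 * int (arcs_between (window_tournament k l) X (- X)) =
           a l * (int l - a l) + (\<Sum>p<l. if k + p \<in> X then int l - 1 - 2 * int p else 0)"
proof (induction l)
  case 0
  then show ?case by (simp add: arcs_between_def a_def)
next
  case (Suc l)
  have new_arcs: "2 * int (arcs_between (window_tournament k (Suc l)) X (- X)) =
      2 * int (arcs_between (window_tournament k l) X (- X)) + (if k + l \<in> X then 0 else 2 * a l)"
    by (simp only: window_tournament.simps arcs_between_add arcs_between_mset)
      (simp add: filter_map o_def a_def length_filter_upt[where P = "\<lambda>p. k + p \<in> X"])
  have shift: "(\<Sum>p<l. if k + p \<in> X then int (Suc l) - 1 - 2 * int p else 0) =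
      (\<Sum>p<l. if k + p \<in> X then int l - 1 - 2 * int p else 0) + a l"
    unfolding a_def by (subst sum.distrib[symmetric], rule sum.cong) auto
  show ?case
    unfolding new_arcs Suc.IH sum.lessThan_Suc shift by (simp add: a_def algebra_simps)
qed

definition window_potential :: "nat set \<Rightarrow> nat \<Rightarrow> nat \<Rightarrow> int" where
  "window_potential X L k = (\<Sum>p<L. if k + p \<in> X then (int p + 1) * (int L - 1 - int p) else 0)"

lemma window_potential_diff:
  "window_potential X L k - window_potential X L (Suc k) =
     (\<Sum>p<L. if k + p \<in> X then int L - 1 - 2 * int p else 0)"
proof -
  let ?f = "\<lambda>q. if k + q \<in> X then int q * (int L - int q) else 0"
  have "window_potential X L (Suc k) = (\<Sum>q<Suc L. ?f q)"
    by (subst sum.lessThan_Suc_shift) (auto simp: window_potential_def algebra_simps intro!: sum.cong)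
  also have "\<dots> = (\<Sum>q<L. ?f q)"
    by simp
  finally have "window_potential X L k - window_potential X L (Suc k) =
      (\<Sum>p<L. (if k + p \<in> X then (int p + 1) * (int L - 1 - int p) else 0) - ?f p)"
    by (simp add: window_potential_def sum_subtractf)
  also have "\<dots> = (\<Sum>p<L. if k + p \<in> X then int L - 1 - 2 * int p else 0)"
    by (intro sum.cong) (auto simp: algebra_simps)
  finally show ?thesis .
qed

lemma window_potential_nonneg: "0 \<le> window_potential X L k"
  unfolding window_potential_def by (intro sum_nonneg) auto

lemma window_potential_le: "window_potential X L k \<le> int L ^ 3"
proof -
  have "window_potential X L k \<le> of_nat (card {..<L}) * int L ^ 2"
    unfolding window_potential_def
  proof (rule sum_bounded_above)
    fix p assume "p \<in> {..<L}"
    then have "(int p + 1) * (int L - 1 - int p) \<le> int L * int L"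
      by (intro mult_mono) auto
    then show "(if k + p \<in> X then (int p + 1) * (int L - 1 - int p) else 0) \<le> int L ^ 2"
      by (auto simp: power2_eq_square)
  qed
  then show ?thesis
    by (simp add: power3_eq_cube power2_eq_square)
qed

lemma cut_window_tournament_le:
  "8 * int (arcs_between (window_tournament k L) X (- X)) \<le>
     int L ^ 2 + 4 * (window_potential X L k - window_potential X L (Suc k))"
proof -
  define a where "a = (\<Sum>p<L. if k + p \<in> X then 1 else 0 :: int)"
  have "4 * (a * (int L - a)) \<le> int L ^ 2"
    using zero_le_power2[of "int L - 2 * a"] by (simp add: power2_eq_square algebra_simps)
  then show ?thesis
    using double_cut_window_tournament[where k = k and X = X and l = L, folded a_def]
      window_potential_diff[of X L k] by (smt (verit))
qed

lemma cut_sliding_windows_le: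
  "8 * arcs_between (\<Sum>k<N. window_tournament k L) X (- X) \<le> N * L ^ 2 + 4 * L ^ 3"
proof -
  have "8 * int (arcs_between (\<Sum>k<N. window_tournament k L) X (- X)) \<le>
      int N * int L ^ 2 + 4 * (window_potential X L 0 - window_potential X L N)"
  proof (induction N)
    case 0
    then show ?case by (simp add: arcs_between_def)
  next
    case (Suc N)
    then show ?case
      using cut_window_tournament_le[of N L X] by (simp add: arcs_between_add algebra_simps)
  qed
  then have "int (8 * arcs_between (\<Sum>k<N. window_tournament k L) X (- X)) \<le>
      int (N * L ^ 2 + 4 * L ^ 3)"
    using window_potential_nonneg[of X L N] window_potential_le[of X L 0] by simp
  then show ?thesis
    by linarith
qed

text \<open>The \<open>r\<close> parallel copies of \<open>(0, 1)\<close> pad the number of arcs to \<open>N L(L - 1)/2 + r\<close>.\<close>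
definition sliding_windows :: "nat \<Rightarrow> nat \<Rightarrow> nat \<Rightarrow> (nat \<times> nat) multiset" where
  "sliding_windows N L r = (\<Sum>k<N. window_tournament k L) + replicate_mset r (0, 1)"

lemma sliding_windows_arcD:
  assumes "2 \<le> L" and "(u, v) \<in># sliding_windows N L r"
  shows "u < v \<and> v < N + L"
proof -
  have "(u, v) \<in># (\<Sum>k<N. window_tournament k L) \<or> (u, v) = (0, 1)"
    using assms(2) unfolding sliding_windows_def by (cases "r = 0") auto
  then show ?thesis
  proof
    assume "(u, v) \<in># (\<Sum>k<N. window_tournament k L)"
    then obtain k where "k < N" "(u, v) \<in># window_tournament k L"
      by (auto simp: set_mset_sum)
    then show ?thesis
      using window_tournament_arcD[of u v k L] by auto
  qed (use assms(1) in auto)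
qed

lemma dmultigraph_sliding_windows:
  "2 \<le> L \<Longrightarrow> dmultigraph {..<N + L} (sliding_windows N L r)"
  unfolding dmultigraph_def by (fastforce dest: sliding_windows_arcD)

lemma dm_acyclic_sliding_windows: "2 \<le> L \<Longrightarrow> dm_acyclic (sliding_windows N L r)"
  unfolding dm_acyclic_def
  by (rule acyclic_subset[OF wf_acyclic[OF wf_less_than]]) (auto dest: sliding_windows_arcD)

lemma size_sliding_windows: "size (sliding_windows N L r) = N * (L * (L - 1) div 2) + r"
  by (simp add: sliding_windows_def size_multiset_sum size_window_tournament)

lemma mac_sliding_windows_le:
  "8 * mac {..<N + L} (sliding_windows N L r) \<le> N * L ^ 2 + 4 * L ^ 3 + 8 * r"
proof -
  obtain X where "mac {..<N + L} (sliding_windows N L r) =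
      arcs_between (sliding_windows N L r) X ({..<N + L} - X)"
    using mac_attained[of "{..<N + L}"] by blast
  moreover have "8 * arcs_between (sliding_windows N L r) X ({..<N + L} - X) \<le>
      N * L ^ 2 + 4 * L ^ 3 + 8 * r"
  proof -
    have "arcs_between (sliding_windows N L r) X ({..<N + L} - X) \<le>
        arcs_between (sliding_windows N L r) X (- X)"
      by (rule arcs_between_mono) auto
    also have "\<dots> \<le> arcs_between (\<Sum>k<N. window_tournament k L) X (- X) + r"
      using arcs_between_le_size[of "replicate_mset r (0, 1)" X "- X"]
      by (simp add: sliding_windows_def arcs_between_add)
    finally show ?thesis
      using cut_sliding_windows_le[where N = N and L = L and X = X] by linarith
  qed
  ultimately show ?thesis
    by simp
qed

lemma sliding_windows_bound_arith:
  fixes m L :: nat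
  assumes "1 \<le> m" and L: "m powr (1/4) + 1 \<le> real L" "real L \<le> m powr (1/4) + 2"
  defines "T \<equiv> L * (L - 1) div 2"
  shows "real (m div T * L ^ 2 + 4 * L ^ 3 + 8 * (m mod T)) \<le> 2 * m + 240 * m powr (3/4)"
proof -
  define s where "s = m powr (1/4)"
  define N r where "N = m div T" and "r = m mod T"
  have s: "1 \<le> s" "s ^ 4 = m" "m powr (3/4) = s ^ 3"
    using \<open>1 \<le> m\<close> by (auto simp: s_def ge_one_powr_ge_zero powr_powr simp flip: powr_realpow)
  have "even (L * (L - 1))"
    by (cases "even L") auto
  then have "2 * T = L * (L - 1)"
    unfolding T_def by simp
  moreover have "1 \<le> real L"
    using L s(1) unfolding s_def by linarith
  ultimately have T2: "2 * real T = real L * (real L - 1)"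
    by (metis of_nat_1 of_nat_diff of_nat_le_iff of_nat_mult of_nat_numeral)
  have m: "real m = real N * real T + real r"
    unfolding N_def r_def by (metis div_mult_mod_eq of_nat_add of_nat_mult)
  have "0 < T"
    using T2 L s(1) unfolding s_def by (cases T) auto
  then have "r \<le> T"
    unfolding r_def by simp
  then have r: "2 * real r \<le> real L ^ 2"
    using T2 by (simp add: power2_eq_square algebra_simps)
  have "real N * real L * s \<le> real N * real L * (real L - 1)"
    using L unfolding s_def by (intro mult_left_mono) auto
  also have "\<dots> = 2 * (real N * real T)"
    by (simp add: mult.assoc flip: T2)
  also have "\<dots> \<le> 2 * real m"
    using m by simp
  also have "\<dots> = 2 * s ^ 3 * s"
    by (simp add: eval_nat_numeral mult.assoc flip: s(2))
  finally have NL: "real N * real L \<le> 2 * s ^ 3"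
    using s(1) by simp
  have "real L ^ 2 \<le> (3 * s) ^ 2" and "real L ^ 3 \<le> (3 * s) ^ 3"
    using L s(1) unfolding s_def by (intro power_mono; simp)+
  then have L23: "real L ^ 2 \<le> 9 * s ^ 2" "real L ^ 3 \<le> 27 * s ^ 3"
    by (simp_all add: power_mult_distrib)
  have s23: "s ^ 2 \<le> s ^ 3"
    using s(1) by (simp add: power_increasing)
  have "real N * real L ^ 2 = real N * (real L * (real L - 1)) + real N * real L"
    by (simp add: power2_eq_square algebra_simps)
  then have NL2: "real N * real L ^ 2 = 2 * (real N * real T) + real N * real L"
    unfolding T2[symmetric] by simp
  show ?thesis
    using m NL r L23 s23 NL2 s(3) unfolding N_def[symmetric] r_def[symmetric] by simp
qed

theorem mainTheorem10:
  shows "\<exists>k1::real. \<forall>m::nat. m \<ge> 1 \<longrightarrow>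
           (\<exists>(V::nat set) (A::(nat \<times> nat) multiset).
              dmultigraph V A \<and> dm_acyclic A \<and> size A = m \<and>
              real (mac V A) \<le> real m / 4 + k1 * real m powr (3/4))"
proof (intro exI[of _ 30] allI impI)
  fix m :: nat
  assume "1 \<le> m"
  define L where "L = nat \<lceil>m powr (1/4)\<rceil> + 1"
  define T where "T = L * (L - 1) div 2"
  define A where "A = sliding_windows (m div T) L (m mod T)"
  have "real L = of_int \<lceil>m powr (1/4)\<rceil> + 1"
    unfolding L_def by (simp add: of_nat_nat)
  then have L: "m powr (1/4) + 1 \<le> real L" "real L \<le> m powr (1/4) + 2"
    by linarith+
  moreover have "0 < m powr (1/4)"
    using \<open>1 \<le> m\<close> by simp
  ultimately have "2 \<le> L"
    by linarith
  have "size A = m"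
    unfolding A_def size_sliding_windows T_def[symmetric] by simp
  moreover have "real (8 * mac {..<m div T + L} A) \<le> real (m div T * L ^ 2 + 4 * L ^ 3 + 8 * (m mod T))"
    unfolding A_def by (intro of_nat_mono mac_sliding_windows_le)
  then have "real (mac {..<m div T + L} A) \<le> real m / 4 + 30 * m powr (3/4)"
    using sliding_windows_bound_arith[OF \<open>1 \<le> m\<close> L, folded T_def] by simp
  ultimately show "\<exists>(V::nat set) A. dmultigraph V A \<and> dm_acyclic A \<and> size A = m \<and>
      real (mac V A) \<le> real m / 4 + 30 * real m powr (3/4)"
    using dmultigraph_sliding_windows[OF \<open>2 \<le> L\<close>] dm_acyclic_sliding_windows[OF \<open>2 \<le> L\<close>]
    unfolding A_def by blast
qed

end
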